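(* Let $n$ be even and let $N$ be a $4$-net of order $n$ with parallel classes $\Pi_0,\dots,\Pi_3$ and a relation $\mathcal R$ of type $(\lambda_0,\dots,\lambda_3)$. Put $g_i=\frac n2-\lambda_i$. Then for every $\mathbf b=(b_0,\dots,b_3)\in\{0,1\}^4$ with an even number of ones, $$t_{\mathbf b}=\frac18 n^2+\frac14 n\sum_{i=0}^{3}(-1)^{b_i}g_i+\frac14\sum_{0\le i<j\le 3}(-1)^{b_i+b_j}g_ig_j .$$
   Context: A $k$-net of order $n$ is a set $P$ of $n^2$ points together with a set $L$ of $kn$ lines (subsets of $P$), each line containing $n$ points and each point lying on $k$ lines, such that $L$ partitions into $k$ parallel classes $\Pi_0,\dots,\Pi_{k-1}$ of $n$ pairwise disjoint lines each, and any two lines from different parallel classes meet in exactly one point. A relation on a net is a set $\mathcal R\subseteq L$ such that every point lies on an even number of lines of $\mathcal R$. Its type is $(\lambda_0,\dots,\lambda_{k-1})$ with $\lambda_i=|\mathcal R\cap\Pi_i|$. The type of a point $p$ is the binary string $\mathbf b\in\{0,1\}^k$ with $b_i=1$ iff the line of $\Pi_i$ through $p$ lies in $\mathcal R$; $t_{\mathbf b}$ is the number of points of type $\mathbf b$. *)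

theory Defs
  imports Complex_Main
begin

definition is_net :: "nat \<Rightarrow> nat \<Rightarrow> 'p set \<Rightarrow> 'p set set \<Rightarrow> (nat \<Rightarrow> 'p set set) \<Rightarrow> bool" where
  "is_net k n P L Pi \<longleftrightarrow>
     finite P \<and> card P = n^2 \<and>
     card L = k * n \<and>
     (\<forall>l\<in>L. l \<subseteq> P \<and> card l = n) \<and>
     (\<forall>p\<in>P. card {l\<in>L. p \<in> l} = k) \<and>
     L = (\<Union>i<k. Pi i) \<and>
     (\<forall>i<k. \<forall>j<k. i \<noteq> j \<longrightarrow> Pi i \<inter> Pi j = {}) \<and>
     (\<forall>i<k. card (Pi i) = n) \<and>
     (\<forall>i<k. \<forall>l\<in>Pi i. \<forall>m\<in>Pi i. l \<noteq> m \<longrightarrow> l \<inter> m = {}) \<and>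
     (\<forall>i<k. \<forall>j<k. i \<noteq> j \<longrightarrow> (\<forall>l\<in>Pi i. \<forall>m\<in>Pi j. card (l \<inter> m) = 1))"

definition is_relation :: "'p set \<Rightarrow> 'p set set \<Rightarrow> 'p set set \<Rightarrow> bool" where
  "is_relation P L R \<longleftrightarrow> R \<subseteq> L \<and> (\<forall>p\<in>P. even (card {l\<in>R. p \<in> l}))"

definition rel_type :: "(nat \<Rightarrow> 'p set set) \<Rightarrow> 'p set set \<Rightarrow> nat \<Rightarrow> nat" where
  "rel_type Pi R i = card (R \<inter> Pi i)"

definition point_type :: "nat \<Rightarrow> (nat \<Rightarrow> 'p set set) \<Rightarrow> 'p set set \<Rightarrow> 'p \<Rightarrow> (nat \<Rightarrow> nat) \<Rightarrow> bool" where
  "point_type k Pi R p b \<longleftrightarrow> (\<forall>i<k. b i = (if (\<exists>l\<in>Pi i \<inter> R. p \<in> l) then 1 else 0))"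

definition t_count :: "nat \<Rightarrow> 'p set \<Rightarrow> (nat \<Rightarrow> 'p set set) \<Rightarrow> 'p set set \<Rightarrow> (nat \<Rightarrow> nat) \<Rightarrow> nat" where
  "t_count k P Pi R b = card {p\<in>P. point_type k Pi R p b}"

end

theory Submission
  imports Defs
begin

text \<open>Let \<open>x\<^sub>i(p) \<in> {0,1}\<close> record whether the line of \<open>\<Pi>\<^sub>i\<close> through \<open>p\<close> lies in \<open>\<R>\<close>, and
  \<open>s\<^sub>i(p) = 1 - 2x\<^sub>i(p)\<close>. Because the lines of a class are disjoint, the relation condition
  says that \<open>x(p)\<close> has even weight. For two even-weight vectors \<open>a, b \<in> {0,1}\<^sup>4\<close> the
  indicator of \<open>a = b\<close> is \<open>\<Prod>\<^sub>i (1 + u\<^sub>i)/16\<close> with \<open>u\<^sub>i = (-1)\<^bsup>a\<^sub>i+b\<^sub>i\<^esup>\<close>, and since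
  \<open>u\<^sub>0u\<^sub>1u\<^sub>2u\<^sub>3 = 1\<close> complementary monomials coincide, leaving only terms of degree at most two.
  Summing over all points, \<open>\<Sum>\<^sub>p s\<^sub>i(p) = n(n - 2\<lambda>\<^sub>i) = 2ng\<^sub>i\<close> and, because two lines from
  different classes meet in exactly one point, \<open>\<Sum>\<^sub>p s\<^sub>i(p)s\<^sub>j(p) = (n - 2\<lambda>\<^sub>i)(n - 2\<lambda>\<^sub>j) = 4g\<^sub>ig\<^sub>j\<close>.\<close>

lemma sum_of_bool_mem:
  assumes "finite P" and "A \<subseteq> P"
  shows "(\<Sum>p\<in>P. of_bool (p \<in> A)) = (of_nat (card A) :: 'a::semiring_1)"
proof -
  have "P \<inter> {p. p \<in> A} = A" using assms(2) by blast
  with assms(1) show ?thesis by simp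
qed

lemma sum_linear_quadratic:
  fixes s :: "'i \<Rightarrow> 'p \<Rightarrow> 'a::comm_semiring_1"
  shows "(\<Sum>p\<in>A. c + (\<Sum>i\<in>I. e i * s i p) + (\<Sum>i\<in>I. \<Sum>j\<in>J i. f i j * (s i p * s j p)))
    = of_nat (card A) * c + (\<Sum>i\<in>I. e i * (\<Sum>p\<in>A. s i p))
      + (\<Sum>i\<in>I. \<Sum>j\<in>J i. f i j * (\<Sum>p\<in>A. s i p * s j p))"
proof -
  have "(\<Sum>p\<in>A. \<Sum>i\<in>I. \<Sum>j\<in>J i. f i j * (s i p * s j p))
      = (\<Sum>i\<in>I. \<Sum>j\<in>J i. \<Sum>p\<in>A. f i j * (s i p * s j p))"
    by (subst sum.swap) (simp only: sum.swap[of _ A])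
  then show ?thesis
    by (simp add: sum.distrib sum_distrib_left sum.swap[of _ A "I"] mult.commute)
qed

lemma all_lessThan_4: "(\<forall>i<4. Q i) \<longleftrightarrow> Q 0 \<and> Q 1 \<and> Q 2 \<and> Q (3::nat)"
  by (auto simp: numeral_eq_Suc less_Suc_eq)

lemma prod_lessThan_4: "(\<Prod>i<4. f i) = f 0 * f 1 * f 2 * f (3::nat)"
  by (simp add: numeral_eq_Suc)

lemma sum_lessThan_4: "(\<Sum>i<4. f i) = f 0 + f 1 + f 2 + f (3::nat)"
  by (simp add: numeral_eq_Suc)

lemma sum_pairs_lessThan_4:
  "(\<Sum>i<4. \<Sum>j\<in>{i<..<4}. f i j) = f 0 1 + f 0 2 + f 0 3 + f 1 2 + f 1 3 + f 2 (3::nat)"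
proof -
  have "{0<..<4::nat} = {1,2,3}" "{1<..<4::nat} = {2,3}" "{2<..<4::nat} = {3}" "{3<..<4::nat} = {}"
    by auto
  then show ?thesis by (simp add: sum_lessThan_4 add.assoc)
qed

lemma of_bool_all_signs_eq_one_4:
  fixes u :: "nat \<Rightarrow> real"
  assumes "\<forall>i<4. u i \<in> {-1, 1}" and "(\<Prod>i<4. u i) = 1"
  shows "16 * of_bool (\<forall>i<4. u i = 1) = 2 + 2 * (\<Sum>i<4. u i) + (\<Sum>i<4. \<Sum>j\<in>{i<..<4}. u i * u j)"
proof -
  have scalar: "16 * of_bool (u0 = 1 \<and> u1 = 1 \<and> u2 = 1 \<and> u3 = 1)
      = 2 + 2 * (u0 + u1 + u2 + u3) + (u0 * u1 + u0 * u2 + u0 * u3 + u1 * u2 + u1 * u3 + u2 * u3)"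
    if "u0 = -1 \<or> u0 = 1" "u1 = -1 \<or> u1 = 1" "u2 = -1 \<or> u2 = 1" "u3 = -1 \<or> u3 = 1"
      "u0 * u1 * u2 * u3 = 1"
    for u0 u1 u2 u3 :: real
    using that by (elim disjE; simp)
  have "u 0 = -1 \<or> u 0 = 1" "u 1 = -1 \<or> u 1 = 1" "u 2 = -1 \<or> u 2 = 1" "u 3 = -1 \<or> u 3 = 1"
    using assms(1) unfolding all_lessThan_4 by simp_all
  from scalar[OF this assms(2)[unfolded prod_lessThan_4]] show ?thesis
    unfolding all_lessThan_4 sum_pairs_lessThan_4 sum_lessThan_4 .
qed

lemma of_bool_eq_even_weight_4:
  fixes a b :: "nat \<Rightarrow> nat"
  assumes a: "\<forall>i<4. a i \<in> {0, 1}" and b: "\<forall>i<4. b i \<in> {0, 1}"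
    and "even (\<Sum>i<4. a i)" "even (\<Sum>i<4. b i)"
  shows "16 * of_bool (\<forall>i<4. b i = a i) =
    2 + (\<Sum>i<4. 2 * (-1)^b i * (1 - 2 * real (a i)))
      + (\<Sum>i<4. \<Sum>j\<in>{i<..<4}. (-1)^(b i + b j) * ((1 - 2 * real (a i)) * (1 - 2 * real (a j))))"
proof -
  define u where "u i = (-1::real)^(b i + a i)" for i
  have sign: "(-1)^b i * (1 - 2 * real (a i)) = u i" if "i < 4" for i
    using a that by (auto simp: u_def)
  have "(\<Prod>i<4. u i) = (-1) ^ (\<Sum>i<4. b i + a i)"
    by (simp add: u_def power_sum)
  also have "\<dots> = 1"
    using assms(3,4) by (simp add: sum.distrib)
  finally have "(\<Prod>i<4. u i) = 1" .
  moreover have "\<forall>i<4. u i \<in> {-1, 1}"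
    by (simp add: u_def minus_one_power_iff)
  moreover have "u i = 1 \<longleftrightarrow> b i = a i" if "i < 4" for i
  proof -
    have "a i \<in> {0, 1}" "b i \<in> {0, 1}" using a b that by auto
    then show ?thesis by (auto simp: u_def)
  qed
  then have "(\<forall>i<4. u i = 1) \<longleftrightarrow> (\<forall>i<4. b i = a i)" by blast
  moreover have "(\<Sum>i<4. 2 * (-1)^b i * (1 - 2 * real (a i))) = 2 * (\<Sum>i<4. u i)"
    by (simp add: sum_distrib_left sign mult.assoc)
  moreover have "(-1)^(b i + b j) * ((1 - 2 * real (a i)) * (1 - 2 * real (a j))) = u i * u j"
    if "i < 4" "j < 4" for i j
  proof -
    have "(-1)^(b i + b j) * ((1 - 2 * real (a i)) * (1 - 2 * real (a j)))
        = ((-1)^b i * (1 - 2 * real (a i))) * ((-1)^b j * (1 - 2 * real (a j)))"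
      by (simp add: power_add mult_ac)
    with sign that show ?thesis by simp
  qed
  then have "(\<Sum>i<4. \<Sum>j\<in>{i<..<4}. (-1)^(b i + b j) * ((1 - 2 * real (a i)) * (1 - 2 * real (a j))))
      = (\<Sum>i<4. \<Sum>j\<in>{i<..<4}. u i * u j)"
    by (intro sum.cong refl) auto
  ultimately show ?thesis
    using of_bool_all_signs_eq_one_4[of u] by simp
qed

definition rel_indicator :: "(nat \<Rightarrow> 'p set set) \<Rightarrow> 'p set set \<Rightarrow> nat \<Rightarrow> 'p \<Rightarrow> nat" where
  "rel_indicator Pi R i p = (if \<exists>l\<in>Pi i \<inter> R. p \<in> l then 1 else 0)"

lemma point_type_iff_rel_indicator:
  "point_type k Pi R p b \<longleftrightarrow> (\<forall>i<k. b i = rel_indicator Pi R i p)"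
  unfolding point_type_def rel_indicator_def ..

lemma
  assumes "is_net k n P L Pi"
  shows net_finite_points: "finite P"
    and net_card_points: "card P = n^2"
    and net_line_subset: "l \<in> L \<Longrightarrow> l \<subseteq> P"
    and net_line_card: "l \<in> L \<Longrightarrow> card l = n"
    and net_lines_eq: "L = (\<Union>i<k. Pi i)"
    and net_classes_disjoint: "i < k \<Longrightarrow> j < k \<Longrightarrow> i \<noteq> j \<Longrightarrow> Pi i \<inter> Pi j = {}"
    and net_parallel_lines_disjoint:
      "i < k \<Longrightarrow> l \<in> Pi i \<Longrightarrow> m \<in> Pi i \<Longrightarrow> l \<noteq> m \<Longrightarrow> l \<inter> m = {}"
    and net_card_meet:
      "i < k \<Longrightarrow> j < k \<Longrightarrow> i \<noteq> j \<Longrightarrow> l \<in> Pi i \<Longrightarrow> m \<in> Pi j \<Longrightarrow> card (l \<inter> m) = 1"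
proof -
  note H = assms[unfolded is_net_def]
  show "finite P" "card P = n^2" "l \<in> L \<Longrightarrow> l \<subseteq> P" "l \<in> L \<Longrightarrow> card l = n"
    using H by auto
  show "L = (\<Union>i<k. Pi i)"
    using H by (elim conjE) assumption
  show "i < k \<Longrightarrow> j < k \<Longrightarrow> i \<noteq> j \<Longrightarrow> Pi i \<inter> Pi j = {}"
    "i < k \<Longrightarrow> l \<in> Pi i \<Longrightarrow> m \<in> Pi i \<Longrightarrow> l \<noteq> m \<Longrightarrow> l \<inter> m = {}"
    "i < k \<Longrightarrow> j < k \<Longrightarrow> i \<noteq> j \<Longrightarrow> l \<in> Pi i \<Longrightarrow> m \<in> Pi j \<Longrightarrow> card (l \<inter> m) = 1"
    using H by (elim conjE; simp)+
qed

lemma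
  assumes "is_net k n P L Pi" and "i < k"
  shows net_finite_class: "finite (Pi i)"
    and net_class_line_subset: "l \<in> Pi i \<Longrightarrow> l \<subseteq> P"
    and net_class_line_card: "l \<in> Pi i \<Longrightarrow> card l = n"
proof -
  have class_lines: "Pi i \<subseteq> L"
    using net_lines_eq[OF assms(1)] assms(2) by blast
  then show "l \<in> Pi i \<Longrightarrow> l \<subseteq> P" "l \<in> Pi i \<Longrightarrow> card l = n"
    using net_line_subset[OF assms(1)] net_line_card[OF assms(1)] by auto
  have "L \<subseteq> Pow P"
    using net_line_subset[OF assms(1)] by blast
  then have "finite L"
    using net_finite_points[OF assms(1)] by (meson finite_Pow_iff finite_subset)
  with class_lines show "finite (Pi i)" by (rule finite_subset)
qed

lemma rel_indicator_eq_card: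
  assumes "is_net k n P L Pi" and "i < k"
  shows "rel_indicator Pi R i p = card {l \<in> Pi i \<inter> R. p \<in> l}"
proof (cases "\<exists>l\<in>Pi i \<inter> R. p \<in> l")
  case True
  then obtain l where l: "l \<in> Pi i \<inter> R" "p \<in> l" by blast
  with net_parallel_lines_disjoint[OF assms] have "{l \<in> Pi i \<inter> R. p \<in> l} = {l}" by blast
  with True show ?thesis by (simp add: rel_indicator_def)
next
  case False
  then have "{l \<in> Pi i \<inter> R. p \<in> l} = {}" by blast
  with False show ?thesis by (metis card.empty rel_indicator_def)
qed

lemma rel_indicator_eq_sum:
  assumes "is_net k n P L Pi" and "i < k"
  shows "rel_indicator Pi R i p = (\<Sum>l\<in>Pi i \<inter> R. of_bool (p \<in> l))"
proof -
  have "{l \<in> Pi i \<inter> R. p \<in> l} = Pi i \<inter> R \<inter> {l. p \<in> l}" by blast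
  then show ?thesis
    unfolding rel_indicator_eq_card[OF assms] using net_finite_class[OF assms] by simp
qed

lemma sum_rel_indicator:
  assumes "is_net k n P L Pi" and "i < k"
  shows "(\<Sum>p\<in>P. rel_indicator Pi R i p) = rel_type Pi R i * n"
proof -
  have "(\<Sum>p\<in>P. rel_indicator Pi R i p) = (\<Sum>l\<in>Pi i \<inter> R. \<Sum>p\<in>P. of_bool (p \<in> l))"
    unfolding rel_indicator_eq_sum[OF assms] by (rule sum.swap)
  also have "\<dots> = (\<Sum>l\<in>Pi i \<inter> R. n)"
  proof (rule sum.cong[OF refl])
    fix l assume "l \<in> Pi i \<inter> R"
    then show "(\<Sum>p\<in>P. of_bool (p \<in> l)) = n"
      using sum_of_bool_mem[where 'a=nat, OF net_finite_points[OF assms(1)] net_class_line_subset[OF assms]]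
        net_class_line_card[OF assms] by simp
  qed
  also have "\<dots> = rel_type Pi R i * n"
    by (simp add: rel_type_def Int_commute)
  finally show ?thesis .
qed

lemma sum_rel_indicator_mult:
  assumes "is_net k n P L Pi" and "i < k" "j < k" "i \<noteq> j"
  shows "(\<Sum>p\<in>P. rel_indicator Pi R i p * rel_indicator Pi R j p) = rel_type Pi R i * rel_type Pi R j"
proof -
  have "(\<Sum>p\<in>P. rel_indicator Pi R i p * rel_indicator Pi R j p)
      = (\<Sum>p\<in>P. \<Sum>l\<in>Pi i \<inter> R. \<Sum>m\<in>Pi j \<inter> R. of_bool (p \<in> l \<inter> m))"
    by (simp add: rel_indicator_eq_sum[OF assms(1,2)] rel_indicator_eq_sum[OF assms(1,3)] sum_product of_bool_conj)
  also have "\<dots> = (\<Sum>l\<in>Pi i \<inter> R. \<Sum>m\<in>Pi j \<inter> R. \<Sum>p\<in>P. of_bool (p \<in> l \<inter> m))"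
    by (subst sum.swap) (simp only: sum.swap[of _ P])
  also have "\<dots> = (\<Sum>l\<in>Pi i \<inter> R. \<Sum>m\<in>Pi j \<inter> R. 1)"
  proof (intro sum.cong refl)
    fix l m assume l: "l \<in> Pi i \<inter> R" and m: "m \<in> Pi j \<inter> R"
    have "l \<inter> m \<subseteq> P" using l net_class_line_subset[OF assms(1,2)] by blast
    from sum_of_bool_mem[where 'a=nat, OF net_finite_points[OF assms(1)] this]
    show "(\<Sum>p\<in>P. of_bool (p \<in> l \<inter> m)) = (1::nat)"
      using net_card_meet[OF assms IntD1[OF l] IntD1[OF m]] by simp
  qed
  also have "\<dots> = rel_type Pi R i * rel_type Pi R j"
    by (simp add: rel_type_def Int_commute)
  finally show ?thesis .
qed

lemma even_sum_rel_indicator: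
  assumes "is_net k n P L Pi" and "is_relation P L R" and "p \<in> P"
  shows "even (\<Sum>i<k. rel_indicator Pi R i p)"
proof -
  have "R \<subseteq> (\<Union>i<k. Pi i)"
    using assms(2) net_lines_eq[OF assms(1)] unfolding is_relation_def by blast
  then have "{l \<in> R. p \<in> l} = (\<Union>i<k. {l \<in> Pi i \<inter> R. p \<in> l})" by blast
  also have "card \<dots> = (\<Sum>i<k. card {l \<in> Pi i \<inter> R. p \<in> l})"
  proof (rule card_UN_disjoint)
    show "\<forall>i\<in>{..<k}. finite {l \<in> Pi i \<inter> R. p \<in> l}"
      using net_finite_class[OF assms(1)] by simp
    show "\<forall>i\<in>{..<k}. \<forall>j\<in>{..<k}. i \<noteq> j \<longrightarrow> {l \<in> Pi i \<inter> R. p \<in> l} \<inter> {l \<in> Pi j \<inter> R. p \<in> l} = {}"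
      using net_classes_disjoint[OF assms(1)] by blast
  qed simp
  also have "\<dots> = (\<Sum>i<k. rel_indicator Pi R i p)"
    using rel_indicator_eq_card[OF assms(1)] by simp
  finally show ?thesis
    using assms(2,3) unfolding is_relation_def by metis
qed

lemma sum_signed_rel_indicator:
  assumes "is_net k n P L Pi" and "i < k"
  shows "(\<Sum>p\<in>P. 1 - 2 * real (rel_indicator Pi R i p)) = real n * (real n - 2 * real (rel_type Pi R i))"
proof -
  have "(\<Sum>p\<in>P. 1 - 2 * real (rel_indicator Pi R i p))
      = real (card P) - 2 * real (\<Sum>p\<in>P. rel_indicator Pi R i p)"
    by (simp add: sum_subtractf sum_distrib_left)
  then show ?thesis
    using sum_rel_indicator[OF assms] net_card_points[OF assms(1)] by (simp add: algebra_simps power2_eq_square)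
qed

lemma sum_signed_rel_indicator_mult:
  assumes "is_net k n P L Pi" and "i < k" "j < k" "i \<noteq> j"
  shows "(\<Sum>p\<in>P. (1 - 2 * real (rel_indicator Pi R i p)) * (1 - 2 * real (rel_indicator Pi R j p)))
    = (real n - 2 * real (rel_type Pi R i)) * (real n - 2 * real (rel_type Pi R j))"
proof -
  have "(\<Sum>p\<in>P. (1 - 2 * real (rel_indicator Pi R i p)) * (1 - 2 * real (rel_indicator Pi R j p)))
      = real (card P) - 2 * real (\<Sum>p\<in>P. rel_indicator Pi R i p) - 2 * real (\<Sum>p\<in>P. rel_indicator Pi R j p)
        + 4 * real (\<Sum>p\<in>P. rel_indicator Pi R i p * rel_indicator Pi R j p)"
    by (simp add: algebra_simps sum.distrib sum_subtractf sum_distrib_left)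
  then show ?thesis
    using sum_rel_indicator[OF assms(1,2)] sum_rel_indicator[OF assms(1,3)]
      sum_rel_indicator_mult[OF assms] net_card_points[OF assms(1)]
    by (simp add: algebra_simps power2_eq_square)
qed

theorem mainTheorem3:
  fixes n :: nat and P :: "'p set" and L :: "'p set set" and Pi :: "nat \<Rightarrow> 'p set set"
    and R :: "'p set set" and b :: "nat \<Rightarrow> nat"
  assumes "even n"
    and "is_net 4 n P L Pi"
    and "is_relation P L R"
    and "\<forall>i<4. b i \<in> {0, 1}"
    and "even (\<Sum>i<4. b i)"
  shows "(let g = (\<lambda>i. real n / 2 - real (rel_type Pi R i)) in
          real (t_count 4 P Pi R b) =
            (real n)^2 / 8
            + real n / 4 * (\<Sum>i<4. (-1)^(b i) * g i)
            + 1/4 * (\<Sum>i<4. \<Sum>j\<in>{i<..<4}. (-1)^(b i + b j) * g i * g j))"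
proof -
  note net = assms(2)
  define s where "s i p = 1 - 2 * real (rel_indicator Pi R i p)" for i p
  define lam where "lam i = real (rel_type Pi R i)" for i
  have "16 * real (t_count 4 P Pi R b) = (\<Sum>p\<in>P. 16 * of_bool (\<forall>i<4. b i = rel_indicator Pi R i p))"
    using net_finite_points[OF net]
    by (simp add: t_count_def point_type_iff_rel_indicator sum_distrib_left[symmetric] Collect_conj_eq Int_commute)
  also have "\<dots> = (\<Sum>p\<in>P. 2 + (\<Sum>i<4. 2 * (-1)^b i * s i p)
      + (\<Sum>i<4. \<Sum>j\<in>{i<..<4}. (-1)^(b i + b j) * (s i p * s j p)))"
    unfolding s_def using assms(4,5) even_sum_rel_indicator[OF net assms(3)]
    by (intro sum.cong refl of_bool_eq_even_weight_4) (auto simp: rel_indicator_def)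
  also have "\<dots> = 2 * real n ^ 2 + (\<Sum>i<4. 2 * (-1)^b i * (real n * (real n - 2 * lam i)))
      + (\<Sum>i<4. \<Sum>j\<in>{i<..<4}. (-1)^(b i + b j) * ((real n - 2 * lam i) * (real n - 2 * lam j)))"
    unfolding sum_linear_quadratic s_def lam_def net_card_points[OF net]
    using sum_signed_rel_indicator[OF net] sum_signed_rel_indicator_mult[OF net]
    by (simp add: mult_ac)
  finally show ?thesis
    unfolding Let_def lam_def[symmetric] sum_pairs_lessThan_4 sum_lessThan_4
    by (simp add: field_simps power2_eq_square)
qed

end
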